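(* Let $k\ge1$ be an integer and $\alpha>\beta>0$. Then $$ \int_{-1}^1(1-x)^{\alpha+1}(1+x)^{\beta+1}W(x)\,dx=\frac{(\rho^2-\eta^2)(\rho^2-\sigma^2)}{\rho(\rho-1)}\,{\bf h}_k^2 . $$
   Context: $y=P_k^{(\alpha,\beta)}(x)$ is the Jacobi polynomial in the standard (Szegő) normalization, orthogonal on $[-1,1]$ with weight $(1-x)^\alpha(1+x)^\beta$, with squared norm ${\bf h}_k^2=\frac{2^{\alpha+\beta+1}\Gamma(k+\alpha+1)\Gamma(k+\beta+1)}{(2k+\alpha+\beta+1)\,k!\,\Gamma(k+\alpha+\beta+1)}$. Put $\eta=\alpha-\beta$, $\sigma=\alpha+\beta$, $\rho=2k+\alpha+\beta$, and $$W(x)=(\rho^2-\sigma^2)y^2-4(\eta+\sigma x)yy'+4(1-x^2)y'^2 .$$ *)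

theory Defs
  imports "HOL-Analysis.Analysis"
begin

text \<open>Jacobi polynomial in the standard (Szego) normalization:
  P_k^{(a,b)}(x) = sum_{s=0}^k binom(k+a, k-s) binom(k+b, s) ((x-1)/2)^s ((x+1)/2)^(k-s).\<close>
definition jacobiP :: "nat \<Rightarrow> real \<Rightarrow> real \<Rightarrow> real \<Rightarrow> real" where
  "jacobiP k a b x =
     (\<Sum>s\<le>k. ((real k + a) gchoose (k - s)) * ((real k + b) gchoose s)
              * ((x - 1) / 2) ^ s * ((x + 1) / 2) ^ (k - s))"

text \<open>Squared norm h_k^2 of P_k^{(a,b)}.\<close>
definition jacobi_hsq :: "nat \<Rightarrow> real \<Rightarrow> real \<Rightarrow> real" where
  "jacobi_hsq k a b =
     2 powr (a + b + 1) * Gamma (real k + a + 1) * Gamma (real k + b + 1)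
     / ((2 * real k + a + b + 1) * fact k * Gamma (real k + a + b + 1))"

definition jacobiW :: "nat \<Rightarrow> real \<Rightarrow> real \<Rightarrow> real \<Rightarrow> real" where
  "jacobiW k a b x =
     (let y = jacobiP k a b x; y' = deriv (jacobiP k a b) x;
          \<eta> = a - b; \<sigma> = a + b; \<rho> = 2 * real k + a + b
      in (\<rho>^2 - \<sigma>^2) * y^2 - 4 * (\<eta> + \<sigma> * x) * y * y' + 4 * (1 - x^2) * y'^2)"

end

theory Submission
  imports Defs "HOL-Computational_Algebra.Polynomial"
begin

(*
  Put w = (1 - x) powr alpha * (1 + x) powr beta and t = (x - 1) / 2.  Expanding P_k in the
  products ((1 - x)/2)^s ((1 + x)/2)^(k - s) turns the integrals of w P_k t^j into Beta
  integrals, and a k-th finite difference makes them vanish for j < k.  So the integral of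
  w P_k q is the t^k-coefficient of q times a Gamma quotient whenever deg q <= k; this gives the
  orthogonality of P_k and P_(k-1), the norm h_k and the integral of w x P_k P_(k-1).
  Comparing coefficients in t proves the differentiation formula
    Z := rho (1 - x^2) P_k' - k (eta - rho x) P_k = 2 (k + alpha) (k + beta) P_(k-1),
  and W satisfies rho^2 (1 - x^2) W = 4 Z^2 - 4 (sigma eta + rho^2 x) P_k Z
  + (rho^2 - sigma^2) (rho^2 - eta^2) P_k^2.  Hence (1 - x^2) W is a quadratic form in P_k and
  P_(k-1), whose integral against w is read off from the three integrals above.
*)

section \<open>Beta integrals for the Jacobi weight\<close>

definition jacobi_weight :: "real \<Rightarrow> real \<Rightarrow> real \<Rightarrow> real" where
  "jacobi_weight a b x = (1 - x) powr a * (1 + x) powr b"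

lemma has_integral_Beta_interval:
  fixes p q :: real
  assumes "p > -1" "q > -1"
  shows "((\<lambda>x. ((1 - x) / 2) powr p * ((1 + x) / 2) powr q) has_integral 2 * Beta (p + 1) (q + 1))
           {-1..1}"
proof -
  have "((\<lambda>t. t powr q * (1 - t) powr p) has_integral Beta (p + 1) (q + 1)) (cbox 0 1)"
    using has_integral_Beta_real[of "q + 1" "p + 1"] assms by (simp add: Beta_commute)
  from has_integral_affinity'[OF this, of "1/2" "1/2"]
  show ?thesis
    by (simp add: field_simps)
qed

lemma has_integral_jacobi_weight_monomial:
  fixes a b :: real
  assumes "a > -1" "b > -1"
  shows "((\<lambda>x. jacobi_weight a b x * ((1 - x) / 2) ^ i * ((1 + x) / 2) ^ j) has_integral
           2 powr (a + b + 1) * Beta (a + real i + 1) (b + real j + 1)) {-1..1}"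
proof -
  have "((\<lambda>x. 2 powr (a + b) * (((1 - x) / 2) powr (a + real i) * ((1 + x) / 2) powr (b + real j)))
          has_integral 2 powr (a + b) * (2 * Beta (a + real i + 1) (b + real j + 1))) {-1<..<1}"
    using assms by (simp only: has_integral_Icc_iff_Ioo[symmetric])
      (intro has_integral_mult_right has_integral_Beta_interval, auto)
  then have "((\<lambda>x. jacobi_weight a b x * ((1 - x) / 2) ^ i * ((1 + x) / 2) ^ j)
          has_integral 2 powr (a + b) * (2 * Beta (a + real i + 1) (b + real j + 1))) {-1<..<1}"
  proof (rule has_integral_eq[rotated])
    fix x :: real assume "x \<in> {-1<..<1}"
    then have "(1 - x) powr a = 2 powr a * ((1 - x) / 2) powr a"
      and "(1 + x) powr b = 2 powr b * ((1 + x) / 2) powr b"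
      by (simp_all add: powr_divide)
    with \<open>x \<in> {-1<..<1}\<close> show "2 powr (a + b) * (((1 - x) / 2) powr (a + real i) * ((1 + x) / 2) powr (b + real j))
      = jacobi_weight a b x * ((1 - x) / 2) ^ i * ((1 + x) / 2) ^ j"
      by (simp add: jacobi_weight_def powr_add powr_realpow)
  qed
  then show ?thesis
    by (simp add: has_integral_Icc_iff_Ioo powr_add mult_ac)
qed

section \<open>Moments of Jacobi polynomials\<close>

lemma sum_alternating_binomial_Suc:
  fixes f :: "nat \<Rightarrow> real"
  shows "(\<Sum>s\<le>Suc k. (-1) ^ s * real (Suc k choose s) * f s)
       = (\<Sum>s\<le>k. (-1) ^ s * real (k choose s) * (f s - f (Suc s)))"
proof -
  have shift: "(\<Sum>s\<le>Suc k. (-1) ^ s * real (n choose s) * f s)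
      = f 0 - (\<Sum>s\<le>k. (-1) ^ s * real (n choose Suc s) * f (Suc s))" for n
    by (subst sum.atMost_Suc_shift) (simp add: sum_negf)
  have "(\<Sum>s\<le>k. (-1) ^ s * real (k choose s) * (f s - f (Suc s)))
      = (\<Sum>s\<le>Suc k. (-1) ^ s * real (k choose s) * f s)
        - (\<Sum>s\<le>k. (-1) ^ s * real (k choose s) * f (Suc s))"
    by (simp add: sum_subtractf algebra_simps)
  also have "\<dots> = (\<Sum>s\<le>Suc k. (-1) ^ s * real (Suc k choose s) * f s)"
    unfolding shift by (simp add: sum.distrib[symmetric] algebra_simps)
  finally show ?thesis ..
qed

(* A k-th finite difference annihilates polynomials of degree less than k. *)
lemma sum_alternating_binomial_pochhammer:
  fixes a :: real
  assumes "j \<le> k"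
  shows "(\<Sum>s\<le>k. (-1) ^ s * real (k choose s) * pochhammer (a + real s + 1) j)
        = (if j = k then (-1) ^ k * fact k else 0)"
  using assms
proof (induction k arbitrary: a j)
  case 0
  then show ?case by simp
next
  case (Suc k)
  show ?case
  proof (cases j)
    case 0
    then show ?thesis
      using sum_alternating_binomial_Suc[of k "\<lambda>_. 1"] by simp
  next
    case (Suc i)
    have difference: "pochhammer (a + real s + 1) j - pochhammer (a + real (Suc s) + 1) j
        = - real j * pochhammer ((a + 1) + real s + 1) i" for s
      using pochhammer_rec[of "a + real s + 1" i] pochhammer_rec'[of "a + real s + 2" i]
      by (simp add: Suc algebra_simps)
    have "(\<Sum>s\<le>Suc k. (-1) ^ s * real (Suc k choose s) * pochhammer (a + real s + 1) j)
        = (\<Sum>s\<le>k. (-1) ^ s * real (k choose s)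
             * (pochhammer (a + real s + 1) j - pochhammer (a + real (Suc s) + 1) j))"
      by (rule sum_alternating_binomial_Suc)
    also have "\<dots> = - real j * (\<Sum>s\<le>k. (-1) ^ s * real (k choose s) * pochhammer ((a + 1) + real s + 1) i)"
      by (simp only: difference) (simp add: sum_distrib_left algebra_simps)
    also have "\<dots> = (if j = Suc k then (-1) ^ Suc k * fact (Suc k) else 0)"
      using Suc.prems \<open>j = Suc i\<close> by (subst Suc.IH) (auto simp: algebra_simps)
    finally show ?thesis .
  qed
qed

lemma Gamma_plus1_pos:
  fixes x :: real
  assumes "x > 0"
  shows "Gamma (x + 1) = x * Gamma x"
proof -
  from assms have "x \<notin> \<int>\<^sub>\<le>\<^sub>0"
    by auto
  then show ?thesis
    by (rule Gamma_plus1)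
qed

lemma jacobi_term_mult_Beta:
  fixes a b :: real
  assumes a: "a > -1" and b: "b > -1" and "s \<le> k"
  shows "((real k + a) gchoose (k - s)) * ((real k + b) gchoose s)
           * Beta (a + real (s + j) + 1) (b + real (k - s) + 1)
       = Gamma (real k + a + 1) * Gamma (real k + b + 1) / (fact k * Gamma (a + b + real k + real j + 2))
         * real (k choose s) * pochhammer (a + real s + 1) j"
proof -
  have not_pole: "x > 0 \<Longrightarrow> x \<notin> \<int>\<^sub>\<le>\<^sub>0" for x :: real
    by auto
  have binom_a: "(real k + a) gchoose (k - s) = Gamma (real k + a + 1) / (fact (k - s) * Gamma (a + real s + 1))"
    using gbinomial_Gamma[of "real k + a" "k - s"] a \<open>s \<le> k\<close> by (simp add: not_pole of_nat_diff)
  have binom_b: "(real k + b) gchoose s = Gamma (real k + b + 1) / (fact s * Gamma (b + real (k - s) + 1))"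
    using gbinomial_Gamma[of "real k + b" s] b \<open>s \<le> k\<close> by (simp add: not_pole of_nat_diff algebra_simps)
  have Beta: "Beta (a + real (s + j) + 1) (b + real (k - s) + 1)
      = Gamma (a + real s + 1 + real j) * Gamma (b + real (k - s) + 1) / Gamma (a + b + real k + real j + 2)"
    using \<open>s \<le> k\<close> by (simp add: Beta_def of_nat_diff add_ac)
  have poch: "pochhammer (a + real s + 1) j = Gamma (a + real s + 1 + real j) / Gamma (a + real s + 1)"
    using a by (simp add: pochhammer_Gamma not_pole)
  have binom: "real (k choose s) = fact k / (fact s * fact (k - s))"
    using \<open>s \<le> k\<close> by (simp add: binomial_fact)
  have "Gamma (a + real s + 1) \<noteq> 0" "Gamma (b + real (k - s) + 1) \<noteq> 0"
    "Gamma (a + b + real k + real j + 2) \<noteq> 0"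
    using a b by (auto intro!: Gamma_real_pos[THEN less_imp_neq, symmetric])
  then show ?thesis
    unfolding binom_a binom_b Beta poch binom by (simp add: field_simps)
qed

definition jacobi_top_moment :: "nat \<Rightarrow> real \<Rightarrow> real \<Rightarrow> real" where
  "jacobi_top_moment k a b
     = 2 powr (a + b + 1) * Gamma (real k + a + 1) * Gamma (real k + b + 1) / Gamma (a + b + 2 * real k + 2)"

lemma has_integral_jacobiP_monomial:
  fixes a b :: real
  assumes a: "a > -1" and b: "b > -1" and "j \<le> k"
  shows "((\<lambda>x. jacobi_weight a b x * jacobiP k a b x * ((x - 1) / 2) ^ j) has_integral
           (if j = k then jacobi_top_moment k a b else 0)) {-1..1}"
proof -
  define c where "c s = ((real k + a) gchoose (k - s)) * ((real k + b) gchoose s)" for s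
  define G where "G = Gamma (real k + a + 1) * Gamma (real k + b + 1)
                        / (fact k * Gamma (a + b + real k + real j + 2))"
  have expand: "jacobi_weight a b x * jacobiP k a b x * ((x - 1) / 2) ^ j
      = (\<Sum>s\<le>k. (c s * (-1) ^ (s + j)) * (jacobi_weight a b x * ((1 - x) / 2) ^ (s + j) * ((1 + x) / 2) ^ (k - s)))"
    for x
  proof -
    have "((x - 1) / 2) ^ n = (-1) ^ n * ((1 - x) / 2) ^ n" for n
      using power_minus[of "(1 - x) / 2" n] by (simp add: minus_divide_left)
    then show ?thesis
      unfolding jacobiP_def c_def sum_distrib_left sum_distrib_right power_add add.commute[of x 1]
      by (intro sum.cong refl) (simp add: mult_ac)
  qed
  have "((\<lambda>x. jacobi_weight a b x * jacobiP k a b x * ((x - 1) / 2) ^ j) has_integral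
      (\<Sum>s\<le>k. (c s * (-1) ^ (s + j)) * (2 powr (a + b + 1) * Beta (a + real (s + j) + 1) (b + real (k - s) + 1))))
      {-1..1}"
    unfolding expand by (intro has_integral_sum has_integral_mult_right has_integral_jacobi_weight_monomial a b) simp
  also have "(\<Sum>s\<le>k. (c s * (-1) ^ (s + j)) * (2 powr (a + b + 1) * Beta (a + real (s + j) + 1) (b + real (k - s) + 1)))
      = ((-1) ^ j * 2 powr (a + b + 1) * G)
        * (\<Sum>s\<le>k. (-1) ^ s * real (k choose s) * pochhammer (a + real s + 1) j)"
    unfolding sum_distrib_left
  proof (intro sum.cong refl)
    fix s assume "s \<in> {..k}"
    then have "c s * Beta (a + real (s + j) + 1) (b + real (k - s) + 1)
        = G * real (k choose s) * pochhammer (a + real s + 1) j"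
      unfolding c_def G_def using jacobi_term_mult_Beta[OF a b, of s k j] by simp
    then show "(c s * (-1) ^ (s + j)) * (2 powr (a + b + 1) * Beta (a + real (s + j) + 1) (b + real (k - s) + 1))
      = ((-1) ^ j * 2 powr (a + b + 1) * G) * ((-1) ^ s * real (k choose s) * pochhammer (a + real s + 1) j)"
      by (simp add: power_add algebra_simps)
  qed
  also have "\<dots> = (if j = k then (-1) ^ k * (-1) ^ k * 2 powr (a + b + 1) * G * fact k else 0)"
    using \<open>j \<le> k\<close> by (simp add: sum_alternating_binomial_pochhammer)
  also have "\<dots> = (if j = k then jacobi_top_moment k a b else 0)"
    by (simp add: G_def jacobi_top_moment_def algebra_simps)
  finally show ?thesis .
qed

section \<open>Jacobi polynomials as polynomials in (x - 1) / 2\<close>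

definition jacobi_coeff :: "nat \<Rightarrow> real \<Rightarrow> real \<Rightarrow> nat \<Rightarrow> real" where
  "jacobi_coeff k a b m = ((real k + a) gchoose (k - m)) * ((real k + a + b + real m) gchoose m)"

definition jacobi_poly :: "nat \<Rightarrow> real \<Rightarrow> real \<Rightarrow> real poly" where
  "jacobi_poly k a b = (\<Sum>m\<le>k. monom (jacobi_coeff k a b m) m)"

lemma coeff_jacobi_poly: "coeff (jacobi_poly k a b) m = (if m \<le> k then jacobi_coeff k a b m else 0)"
  by (simp add: jacobi_poly_def coeff_sum)

lemma degree_jacobi_poly: "degree (jacobi_poly k a b) \<le> k"
  by (rule degree_le) (simp add: coeff_jacobi_poly)

lemma power_mult_binomial_power_eq_sum:
  fixes t :: real
  assumes "s \<le> k"
  shows "t ^ s * (t + 1) ^ (k - s) = (\<Sum>m\<le>k. (if s \<le> m then real ((k - s) choose (m - s)) else 0) * t ^ m)"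
proof -
  have "t ^ s * (t + 1) ^ (k - s) = (\<Sum>i\<le>k - s. real ((k - s) choose i) * t ^ (i + s))"
    by (simp add: binomial_ring sum_distrib_left power_add mult_ac)
  also have "\<dots> = (\<Sum>i\<in>{0 + s..(k - s) + s}. real ((k - s) choose (i - s)) * t ^ i)"
    by (subst sum.shift_bounds_cl_nat_ivl) (simp add: atLeast0AtMost)
  also have "{0 + s..(k - s) + s} = {m \<in> {..k}. s \<le> m}"
    using assms by auto
  also have "(\<Sum>i\<in>{m \<in> {..k}. s \<le> m}. real ((k - s) choose (i - s)) * t ^ i)
      = (\<Sum>m\<le>k. (if s \<le> m then real ((k - s) choose (m - s)) else 0) * t ^ m)"
    by (subst sum.inter_filter) (auto intro!: sum.cong)
  finally show ?thesis .
qed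

lemma sum_gchoose_eq_jacobi_coeff:
  fixes a b :: real
  assumes "m \<le> k"
  shows "(\<Sum>s\<le>k. ((real k + a) gchoose (k - s)) * ((real k + b) gchoose s)
            * (if s \<le> m then real ((k - s) choose (m - s)) else 0)) = jacobi_coeff k a b m"
proof -
  have revision: "((real k + a) gchoose (k - s)) * real ((k - s) choose (m - s))
      = ((real k + a) gchoose (k - m)) * ((a + real m) gchoose (m - s))" if "s \<le> m" for s
  proof -
    have "real ((k - s) choose (m - s)) = of_nat (k - s) gchoose (k - m)"
      using that assms by (subst binomial_symmetric) (auto simp: binomial_gbinomial diff_diff_eq2)
    moreover have "((real k + a) gchoose (k - s)) * (of_nat (k - s) gchoose (k - m))
        = ((real k + a) gchoose (k - m)) * ((real k + a - of_nat (k - m)) gchoose ((k - s) - (k - m)))"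
      using that assms by (intro gbinomial_trinomial_revision) auto
    moreover have "real k + a - of_nat (k - m) = a + real m" "(k - s) - (k - m) = m - s"
      using that assms by (auto simp: of_nat_diff)
    ultimately show ?thesis
      by simp
  qed
  have "(\<Sum>s\<le>k. ((real k + a) gchoose (k - s)) * ((real k + b) gchoose s)
            * (if s \<le> m then real ((k - s) choose (m - s)) else 0))
      = (\<Sum>s\<le>m. ((real k + a) gchoose (k - s)) * ((real k + b) gchoose s) * real ((k - s) choose (m - s)))"
    using assms by (intro sum.mono_neutral_cong_right) auto
  also have "\<dots> = ((real k + a) gchoose (k - m)) * (\<Sum>s\<le>m. ((real k + b) gchoose s) * ((a + real m) gchoose (m - s)))"
    by (simp add: sum_distrib_left revision mult_ac)
  also have "\<dots> = ((real k + a) gchoose (k - m)) * ((real k + b + (a + real m)) gchoose m)"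
    using gbinomial_Vandermonde[of "real k + b" "a + real m" m] by (simp add: atLeast0AtMost)
  also have "\<dots> = jacobi_coeff k a b m"
    by (simp add: jacobi_coeff_def add_ac)
  finally show ?thesis .
qed

lemma jacobiP_eq_poly: "jacobiP k a b x = poly (jacobi_poly k a b) ((x - 1) / 2)"
proof -
  define t where "t = (x - 1) / 2"
  define c where "c s = ((real k + a) gchoose (k - s)) * ((real k + b) gchoose s)" for s
  have shift: "(x + 1) / 2 = t + 1"
    by (simp add: t_def field_simps)
  have "jacobiP k a b x = (\<Sum>s\<le>k. c s * (t ^ s * (t + 1) ^ (k - s)))"
    unfolding jacobiP_def c_def shift t_def[symmetric] by (simp add: mult_ac)
  also have "\<dots> = (\<Sum>s\<le>k. c s * (\<Sum>m\<le>k. (if s \<le> m then real ((k - s) choose (m - s)) else 0) * t ^ m))"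
    by (intro sum.cong refl) (simp add: power_mult_binomial_power_eq_sum)
  also have "\<dots> = (\<Sum>m\<le>k. (\<Sum>s\<le>k. c s * (if s \<le> m then real ((k - s) choose (m - s)) else 0)) * t ^ m)"
    unfolding sum_distrib_left sum_distrib_right by (subst sum.swap) (simp add: mult_ac)
  also have "\<dots> = poly (jacobi_poly k a b) t"
    by (simp add: jacobi_poly_def poly_sum poly_monom c_def sum_gchoose_eq_jacobi_coeff)
  finally show ?thesis
    by (simp add: t_def)
qed

lemma deriv_jacobiP: "deriv (jacobiP k a b) x = poly (pderiv (jacobi_poly k a b)) ((x - 1) / 2) / 2"
proof -
  have "((\<lambda>x. poly (jacobi_poly k a b) ((x - 1) / 2)) has_field_derivative
          poly (pderiv (jacobi_poly k a b)) ((x - 1) / 2) * (1 / 2)) (at x)"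
    by (rule DERIV_chain2[OF poly_DERIV]) (auto intro!: derivative_eq_intros)
  then show ?thesis
    by (simp add: jacobiP_eq_poly[abs_def] DERIV_imp_deriv)
qed

section \<open>Orthogonality and norms\<close>

lemma has_integral_jacobiP_times_poly:
  fixes a b :: real
  assumes a: "a > -1" and b: "b > -1" and "degree p \<le> k"
  shows "((\<lambda>x. jacobi_weight a b x * jacobiP k a b x * poly p ((x - 1) / 2)) has_integral
           coeff p k * jacobi_top_moment k a b) {-1..1}"
proof -
  have "poly p t = (\<Sum>j\<le>k. coeff p j * t ^ j)" for t
    by (subst poly_as_sum_of_monoms'[OF \<open>degree p \<le> k\<close>, symmetric]) (simp add: poly_sum poly_monom)
  then have expand: "jacobi_weight a b x * jacobiP k a b x * poly p ((x - 1) / 2)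
      = (\<Sum>j\<le>k. coeff p j * (jacobi_weight a b x * jacobiP k a b x * ((x - 1) / 2) ^ j))" for x
    by (simp add: sum_distrib_left mult_ac)
  have "((\<lambda>x. jacobi_weight a b x * jacobiP k a b x * poly p ((x - 1) / 2)) has_integral
      (\<Sum>j\<le>k. coeff p j * (if j = k then jacobi_top_moment k a b else 0))) {-1..1}"
    unfolding expand by (intro has_integral_sum has_integral_mult_right has_integral_jacobiP_monomial a b) auto
  then show ?thesis
    by (simp add: if_distrib cong: if_cong)
qed

lemma has_integral_jacobiP_orthogonal:
  fixes a b :: real
  assumes "a > -1" "b > -1" "m < k"
  shows "((\<lambda>x. jacobi_weight a b x * jacobiP k a b x * jacobiP m a b x) has_integral 0) {-1..1}"
  using has_integral_jacobiP_times_poly[of a b "jacobi_poly m a b" k] degree_jacobi_poly[of m a b] assms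
  by (simp add: jacobiP_eq_poly[of m] coeff_jacobi_poly)

lemma jacobi_coeff_diag: "jacobi_coeff k a b k = (2 * real k + a + b) gchoose k"
  by (simp add: jacobi_coeff_def add_ac)

lemma jacobi_coeff_diag_mult_top_moment:
  fixes a b :: real
  assumes "a > -1" "b > -1" "real k + a + b + 1 > 0"
  shows "jacobi_coeff k a b k * jacobi_top_moment k a b = jacobi_hsq k a b"
proof -
  have pos: "2 * real k + a + b + 1 > 0"
    using assms by linarith
  then have "2 * real k + a + b + 1 \<notin> \<int>\<^sub>\<le>\<^sub>0"
    by auto
  then have "(2 * real k + a + b) gchoose k = Gamma (2 * real k + a + b + 1) / (fact k * Gamma (real k + a + b + 1))"
    by (subst gbinomial_Gamma) (simp_all add: algebra_simps)
  moreover have "Gamma (2 * real k + a + b + 2) = (2 * real k + a + b + 1) * Gamma (2 * real k + a + b + 1)"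
    using Gamma_plus1_pos[OF pos] by (simp add: add_ac)
  moreover have "Gamma (2 * real k + a + b + 1) \<noteq> 0" "Gamma (real k + a + b + 1) \<noteq> 0"
    using pos assms by (auto simp: Gamma_eq_zero_iff)
  ultimately show ?thesis
    by (simp add: jacobi_coeff_diag jacobi_top_moment_def jacobi_hsq_def add_ac mult_ac)
qed

lemma has_integral_jacobiP_square:
  fixes a b :: real
  assumes "a > -1" "b > -1" "real k + a + b + 1 > 0"
  shows "((\<lambda>x. jacobi_weight a b x * jacobiP k a b x ^ 2) has_integral jacobi_hsq k a b) {-1..1}"
proof -
  have "((\<lambda>x. jacobi_weight a b x * jacobiP k a b x * jacobiP k a b x) has_integral
      jacobi_coeff k a b k * jacobi_top_moment k a b) {-1..1}"
    using has_integral_jacobiP_times_poly[of a b "jacobi_poly k a b" k] assms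
    by (simp add: jacobiP_eq_poly[of k] coeff_jacobi_poly degree_jacobi_poly)
  then show ?thesis
    using assms by (simp add: jacobi_coeff_diag_mult_top_moment power2_eq_square mult.assoc)
qed

lemma jacobi_coeff_diag_Suc:
  fixes k :: nat and a b :: real
  defines "r \<equiv> 2 * real (Suc k) + a + b"
  shows "jacobi_coeff (Suc k) a b (Suc k) * (real (Suc k) * (real (Suc k) + a + b))
       = r * (r - 1) * jacobi_coeff k a b k"
proof -
  have absorb: "real (Suc k) * (r gchoose Suc k) = r * ((r - 1) gchoose k)"
    by (rule gbinomial_absorption)
  have absorb_comp: "(real (Suc k) + a + b) * ((r - 1) gchoose k) = (r - 1) * ((r - 2) gchoose k)"
    using gbinomial_absorb_comp[of "r - 1" k] by (simp add: r_def algebra_simps)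
  have "jacobi_coeff (Suc k) a b (Suc k) * (real (Suc k) * (real (Suc k) + a + b))
      = (real (Suc k) * (r gchoose Suc k)) * (real (Suc k) + a + b)"
    by (simp add: jacobi_coeff_diag r_def)
  also have "\<dots> = r * ((real (Suc k) + a + b) * ((r - 1) gchoose k))"
    by (simp only: absorb mult_ac)
  also have "\<dots> = r * ((r - 1) * ((r - 2) gchoose k))"
    by (simp only: absorb_comp)
  also have "(r - 2) gchoose k = jacobi_coeff k a b k"
    by (simp add: jacobi_coeff_diag r_def algebra_simps)
  finally show ?thesis
    by (simp only: mult.assoc)
qed

lemma jacobi_hsq_Suc:
  fixes k :: nat and a b :: real
  assumes "a > -1" "b > -1" "real k + a + b + 1 > 0"
  defines "r \<equiv> 2 * real (Suc k) + a + b"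
  shows "(r\<^sup>2 - (a - b)\<^sup>2) * (r - 1) * jacobi_hsq k a b = (r + 1) * (r\<^sup>2 - (a + b)\<^sup>2) * jacobi_hsq (Suc k) a b"
proof -
  define K where "K = real (Suc k)"
  define d where "d = 2 * real k + a + b + 1"
  define e where "e = (2 * K + a + b + 1) * K * (K + a + b)"
  define A B S where "A = Gamma (real k + a + 1)" and "B = Gamma (real k + b + 1)"
    and "S = Gamma (real k + a + b + 1)"
  have "Gamma (K + a + 1) = (K + a) * A" "Gamma (K + b + 1) = (K + b) * B" "Gamma (K + a + b + 1) = (K + a + b) * S"
    using Gamma_plus1_pos[of "real k + a + 1"] Gamma_plus1_pos[of "real k + b + 1"]
      Gamma_plus1_pos[of "real k + a + b + 1"] assms
    by (simp_all add: K_def A_def B_def S_def add_ac)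
  then have hsq_Suc: "jacobi_hsq (Suc k) a b = 2 powr (a + b + 1) * ((K + a) * A) * ((K + b) * B) / (e * fact k * S)"
    unfolding jacobi_hsq_def fact_Suc K_def[symmetric] by (simp add: e_def mult_ac)
  have hsq: "jacobi_hsq k a b = 2 powr (a + b + 1) * A * B / (d * fact k * S)"
    by (simp add: jacobi_hsq_def A_def B_def S_def d_def)
  have "d \<noteq> 0" "e \<noteq> 0" "S \<noteq> 0"
    using assms by (auto simp: d_def e_def K_def S_def Gamma_eq_zero_iff)
  then have "e * jacobi_hsq (Suc k) a b = (K + a) * (K + b) * d * jacobi_hsq k a b"
    unfolding hsq_Suc hsq by (simp add: field_simps)
  moreover have "K = real k + 1"
    by (simp add: K_def)
  ultimately show ?thesis
    unfolding r_def K_def[symmetric] e_def d_def by algebra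
qed

lemma has_integral_x_jacobiP_Suc_jacobiP:
  fixes k :: nat and a b :: real
  assumes "a > -1" "b > -1" "real k + a + b + 1 > 0"
  defines "r \<equiv> 2 * real (Suc k) + a + b"
  shows "((\<lambda>x. jacobi_weight a b x * jacobiP (Suc k) a b x * (x * jacobiP k a b x)) has_integral
           2 * real (Suc k) * (real (Suc k) + a + b) / (r * (r - 1)) * jacobi_hsq (Suc k) a b) {-1..1}"
proof -
  have "x * jacobiP k a b x = poly ([:1, 2:] * jacobi_poly k a b) ((x - 1) / 2)" for x
    by (simp add: jacobiP_eq_poly field_simps)
  moreover have "degree ([:1, 2:] * jacobi_poly k a b) \<le> Suc k"
    using degree_mult_le[of "[:1, 2:]" "jacobi_poly k a b"] degree_jacobi_poly[of k a b] by simp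
  ultimately have "((\<lambda>x. jacobi_weight a b x * jacobiP (Suc k) a b x * (x * jacobiP k a b x)) has_integral
      2 * jacobi_coeff k a b k * jacobi_top_moment (Suc k) a b) {-1..1}"
    using has_integral_jacobiP_times_poly[of a b "[:1, 2:] * jacobi_poly k a b" "Suc k"] assms
    by (simp add: coeff_jacobi_poly)
  moreover have "2 * jacobi_coeff k a b k * jacobi_top_moment (Suc k) a b
      = 2 * real (Suc k) * (real (Suc k) + a + b) / (r * (r - 1)) * jacobi_hsq (Suc k) a b"
  proof -
    have "r * (r - 1) \<noteq> 0"
      using assms by simp
    then have "jacobi_coeff k a b k
        = jacobi_coeff (Suc k) a b (Suc k) * (real (Suc k) * (real (Suc k) + a + b)) / (r * (r - 1))"
      using jacobi_coeff_diag_Suc[of k a b] by (simp add: r_def eq_divide_eq mult.commute)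
    moreover have "jacobi_coeff (Suc k) a b (Suc k) * jacobi_top_moment (Suc k) a b = jacobi_hsq (Suc k) a b"
      using assms by (intro jacobi_coeff_diag_mult_top_moment) auto
    ultimately show ?thesis
      by (simp add: field_simps)
  qed
  ultimately show ?thesis
    by simp
qed

section \<open>A differentiation formula\<close>

lemma jacobi_coeff_Suc_index:
  fixes a b :: real
  assumes "m < k"
  shows "real (Suc m) * (a + real m + 1) * jacobi_coeff k a b (Suc m)
       = (real k - real m) * (real k + a + b + real m + 1) * jacobi_coeff k a b m"
proof -
  have lower: "(a + real m + 1) * ((real k + a) gchoose (k - Suc m)) = (real k - real m) * ((real k + a) gchoose (k - m))"
    using gbinomial_mult_1[of "real k + a" "k - Suc m"] assms
    by (simp add: Suc_diff_Suc of_nat_diff algebra_simps)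
  have upper: "real (Suc m) * ((real k + a + b + real (Suc m)) gchoose Suc m)
      = (real k + a + b + real m + 1) * ((real k + a + b + real m) gchoose m)"
    using gbinomial_absorption[of m "real k + a + b + real (Suc m)"] by (simp add: add_ac)
  show ?thesis
    using lower upper unfolding jacobi_coeff_def by algebra
qed

lemma jacobi_coeff_Suc_degree:
  fixes a b :: real
  assumes "m < n"
  shows "(real n - real m) * (real n + a + b + 1) * jacobi_coeff (Suc n) a b (Suc m)
       = (real n + a + 1) * (real n + a + b + real m + 2) * jacobi_coeff n a b (Suc m)"
proof -
  have lower: "(real n - real m) * ((real (Suc n) + a) gchoose (n - m)) = (real n + a + 1) * ((real n + a) gchoose (n - Suc m))"
    using gbinomial_absorption[of "n - Suc m" "real (Suc n) + a"] assms
    by (simp add: Suc_diff_Suc of_nat_diff algebra_simps)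
  have upper: "(real n + a + b + 1) * ((real (Suc n) + a + b + real (Suc m)) gchoose Suc m)
      = (real n + a + b + real m + 2) * ((real n + a + b + real (Suc m)) gchoose Suc m)"
    using gbinomial_absorb_comp[of "real (Suc n) + a + b + real (Suc m)" "Suc m"] by (simp add: algebra_simps)
  show ?thesis
    using lower upper unfolding jacobi_coeff_def diff_Suc_Suc by algebra
qed

lemma jacobi_coeff_Suc_0: "real (Suc n) * jacobi_coeff (Suc n) a b 0 = (real (Suc n) + a) * jacobi_coeff n a b 0"
  using gbinomial_absorption[of n "real (Suc n) + a"] by (simp add: jacobi_coeff_def add_ac)

lemma coeff_jacobi_poly_derivative_identity:
  fixes n m :: nat and a b :: real
  assumes "a > -1" "b > -1"
  defines "K \<equiv> real (Suc n)"
  defines "r \<equiv> 2 * K + a + b"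
  shows "2 * (K * (K + b) - r * real (Suc m)) * coeff (jacobi_poly (Suc n) a b) (Suc m)
           + 2 * r * (K - real m) * coeff (jacobi_poly (Suc n) a b) m
         = 2 * (K + a) * (K + b) * coeff (jacobi_poly n a b) (Suc m)"
proof (cases "m \<le> n")
  case True
  define g where "g = jacobi_coeff (Suc n) a b"
  define L where "L = 2 * (K * (K + b) - r * real (Suc m)) * g (Suc m) + 2 * r * (K - real m) * g m"
  have pos: "K + a + b + real m + 1 > 0"
    using assms by (simp add: K_def)
  \<comment> \<open>The factor \<open>K + a + b + m + 1\<close> lets \<open>jacobi_coeff_Suc_index\<close> eliminate \<open>g m\<close>.\<close>
  have "(1 + real m) * (a + real m + 1) * g (Suc m) = (K - real m) * (K + a + b + real m + 1) * g m"
    using jacobi_coeff_Suc_index[of m "Suc n" a b] True by (simp add: g_def K_def)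
  then have scaled: "(K + a + b + real m + 1) * L = 2 * (K + b) * (K - real m - 1) * (K + a + b) * g (Suc m)"
    unfolding L_def r_def of_nat_Suc by algebra
  show ?thesis
  proof (cases "m = n")
    case True
    have "(K + a + b + real m + 1) * L = 0"
      using scaled True by (simp add: K_def)
    with pos have "L = 0"
      by simp
    with True show ?thesis
      by (simp add: L_def g_def coeff_jacobi_poly)
  next
    case False
    with \<open>m \<le> n\<close> have "m < n"
      by simp
    then have "(K - real m - 1) * (K + a + b) * g (Suc m)
        = (K + a) * (K + a + b + real m + 1) * jacobi_coeff n a b (Suc m)"
      using jacobi_coeff_Suc_degree[of m n a b] by (simp add: g_def K_def algebra_simps)
    then have "(K + a + b + real m + 1) * L
        = (K + a + b + real m + 1) * (2 * (K + a) * (K + b) * jacobi_coeff n a b (Suc m))"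
      unfolding scaled by algebra
    with pos \<open>m < n\<close> show ?thesis
      by (simp add: L_def g_def coeff_jacobi_poly)
  qed
next
  case False
  then show ?thesis
    by (cases "m = Suc n") (simp_all add: coeff_jacobi_poly K_def)
qed

lemma jacobi_poly_derivative_identity:
  fixes n :: nat and a b :: real
  assumes "a > -1" "b > -1"
  defines "K \<equiv> real (Suc n)"
  defines "r \<equiv> 2 * K + a + b"
  shows "smult (- 2 * r) (pCons 0 ([:1, 1:] * pderiv (jacobi_poly (Suc n) a b)))
           + [:2 * K * (K + b), 2 * K * r:] * jacobi_poly (Suc n) a b
         = smult (2 * (K + a) * (K + b)) (jacobi_poly n a b)"
proof (rule poly_eqI)
  fix i
  have shifted_deriv: "coeff (pCons 0 (pderiv p)) m = real m * coeff p m" for p :: "real poly" and m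
    by (cases m) (simp_all add: coeff_pderiv)
  show "coeff (smult (- 2 * r) (pCons 0 ([:1, 1:] * pderiv (jacobi_poly (Suc n) a b)))
           + [:2 * K * (K + b), 2 * K * r:] * jacobi_poly (Suc n) a b) i
      = coeff (smult (2 * (K + a) * (K + b)) (jacobi_poly n a b)) i"
  proof (cases i)
    case 0
    have "K * jacobi_coeff (Suc n) a b 0 = (K + a) * jacobi_coeff n a b 0"
      using jacobi_coeff_Suc_0[of n a b] by (simp add: K_def)
    then have "2 * K * (K + b) * jacobi_coeff (Suc n) a b 0 = 2 * (K + a) * (K + b) * jacobi_coeff n a b 0"
      by algebra
    with 0 show ?thesis
      by (simp add: coeff_jacobi_poly)
  next
    case (Suc m)
    then show ?thesis
      using coeff_jacobi_poly_derivative_identity[OF assms(1,2), of n m] shifted_deriv[of "jacobi_poly (Suc n) a b" m]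
      by (simp add: coeff_pderiv K_def r_def algebra_simps)
  qed
qed

lemma jacobiP_derivative_identity:
  fixes n :: nat and a b x :: real
  assumes "a > -1" "b > -1"
  defines "K \<equiv> real (Suc n)"
  defines "r \<equiv> 2 * K + a + b"
  shows "r * (1 - x\<^sup>2) * deriv (jacobiP (Suc n) a b) x - K * ((a - b) - r * x) * jacobiP (Suc n) a b x
       = 2 * (K + a) * (K + b) * jacobiP n a b x"
proof -
  define t where "t = (x - 1) / 2"
  have x: "x = 2 * t + 1"
    by (simp add: t_def field_simps)
  have "poly (smult (- 2 * r) (pCons 0 ([:1, 1:] * pderiv (jacobi_poly (Suc n) a b)))
           + [:2 * K * (K + b), 2 * K * r:] * jacobi_poly (Suc n) a b) t
      = poly (smult (2 * (K + a) * (K + b)) (jacobi_poly n a b)) t"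
    using jacobi_poly_derivative_identity[OF assms(1,2)] by (simp only: K_def r_def)
  then show ?thesis
    unfolding deriv_jacobiP jacobiP_eq_poly t_def[symmetric] x r_def by (simp add: algebra_simps power2_eq_square)
qed

section \<open>The weighted integral of W\<close>

lemma jacobiW_Suc_eq:
  fixes n :: nat and a b x :: real
  assumes "a > -1" "b > -1"
  defines "r \<equiv> 2 * real (Suc n) + a + b" and "\<eta> \<equiv> a - b" and "\<sigma> \<equiv> a + b"
  shows "r\<^sup>2 * (1 - x\<^sup>2) * jacobiW (Suc n) a b x
       = (r\<^sup>2 - \<eta>\<^sup>2) * ((r\<^sup>2 - \<eta>\<^sup>2) * jacobiP n a b x ^ 2
           - 2 * (\<sigma> * \<eta> + r\<^sup>2 * x) * jacobiP (Suc n) a b x * jacobiP n a b x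
           + (r\<^sup>2 - \<sigma>\<^sup>2) * jacobiP (Suc n) a b x ^ 2)"
proof -
  define K where "K = real (Suc n)"
  have "r * (1 - x\<^sup>2) * deriv (jacobiP (Suc n) a b) x - K * (\<eta> - r * x) * jacobiP (Suc n) a b x
      = 2 * (K + a) * (K + b) * jacobiP n a b x"
    using jacobiP_derivative_identity[OF assms(1,2), of n x] by (simp add: K_def r_def \<eta>_def)
  then show ?thesis
    unfolding jacobiW_def Let_def r_def \<eta>_def \<sigma>_def K_def[symmetric] by algebra
qed

lemma weighted_jacobiW_Suc_eq:
  fixes n :: nat and a b x :: real
  assumes a: "a > -1" and b: "b > -1" and x: "x \<in> {-1..1}"
  defines "r \<equiv> 2 * real (Suc n) + a + b" and "\<eta> \<equiv> a - b" and "\<sigma> \<equiv> a + b"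
  defines "w \<equiv> jacobi_weight a b x" and "P \<equiv> jacobiP n a b x" and "Q \<equiv> jacobiP (Suc n) a b x"
  shows "(1 - x) powr (a + 1) * (1 + x) powr (b + 1) * jacobiW (Suc n) a b x
       = (r\<^sup>2 - \<eta>\<^sup>2) / r\<^sup>2 * ((r\<^sup>2 - \<eta>\<^sup>2) * (w * P ^ 2) - 2 * \<sigma> * \<eta> * (w * Q * P)
           - 2 * r\<^sup>2 * (w * Q * (x * P)) + (r\<^sup>2 - \<sigma>\<^sup>2) * (w * Q ^ 2))"
proof -
  have "r \<noteq> 0"
    using a b by (simp add: r_def)
  have "(1 - x) powr (a + 1) * (1 + x) powr (b + 1) = w * (1 - x\<^sup>2)"
    using x by (simp add: w_def jacobi_weight_def powr_add power2_eq_square algebra_simps)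
  then have "(1 - x) powr (a + 1) * (1 + x) powr (b + 1) * jacobiW (Suc n) a b x
      = w * (r\<^sup>2 * (1 - x\<^sup>2) * jacobiW (Suc n) a b x) / r\<^sup>2"
    using \<open>r \<noteq> 0\<close> by simp
  also have "\<dots> = w * ((r\<^sup>2 - \<eta>\<^sup>2) * ((r\<^sup>2 - \<eta>\<^sup>2) * P ^ 2
      - 2 * (\<sigma> * \<eta> + r\<^sup>2 * x) * Q * P + (r\<^sup>2 - \<sigma>\<^sup>2) * Q ^ 2)) / r\<^sup>2"
    using jacobiW_Suc_eq[OF a b, of n x] by (simp add: P_def Q_def r_def \<eta>_def \<sigma>_def)
  finally show ?thesis
    by (simp add: field_simps)
qed

lemma has_integral_jacobiW_Suc:
  fixes n :: nat and a b :: real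
  assumes a: "a > -1" and b: "b > -1" and ab: "real n + a + b + 1 > 0"
  defines "r \<equiv> 2 * real (Suc n) + a + b" and "\<eta> \<equiv> a - b" and "\<sigma> \<equiv> a + b"
  shows "((\<lambda>x. (1 - x) powr (a + 1) * (1 + x) powr (b + 1) * jacobiW (Suc n) a b x) has_integral
           (r\<^sup>2 - \<eta>\<^sup>2) * (r\<^sup>2 - \<sigma>\<^sup>2) / (r * (r - 1)) * jacobi_hsq (Suc n) a b) {-1..1}"
proof -
  define K where "K = real (Suc n)"
  define P where "P = jacobiP n a b"
  define Q where "Q = jacobiP (Suc n) a b"
  define w where "w = jacobi_weight a b"
  define X where "X = 2 * K * (K + a + b) / (r * (r - 1)) * jacobi_hsq (Suc n) a b"
  have r: "r = 2 * K + a + b" "r \<noteq> 0" "r - 1 \<noteq> 0"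
    using ab by (simp_all add: r_def K_def)
  have combined: "((\<lambda>x. (r\<^sup>2 - \<eta>\<^sup>2) / r\<^sup>2 * ((r\<^sup>2 - \<eta>\<^sup>2) * (w x * P x ^ 2)
          - 2 * \<sigma> * \<eta> * (w x * Q x * P x) - 2 * r\<^sup>2 * (w x * Q x * (x * P x))
          + (r\<^sup>2 - \<sigma>\<^sup>2) * (w x * Q x ^ 2))) has_integral
      (r\<^sup>2 - \<eta>\<^sup>2) / r\<^sup>2 * ((r\<^sup>2 - \<eta>\<^sup>2) * jacobi_hsq n a b - 2 * \<sigma> * \<eta> * 0
          - 2 * r\<^sup>2 * X + (r\<^sup>2 - \<sigma>\<^sup>2) * jacobi_hsq (Suc n) a b)) {-1..1}"
    unfolding P_def Q_def w_def X_def K_def r_def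
    using a b ab
    by (intro has_integral_mult_right has_integral_add has_integral_diff
        has_integral_jacobiP_square has_integral_jacobiP_orthogonal has_integral_x_jacobiP_Suc_jacobiP) auto
  have "(r\<^sup>2 - \<eta>\<^sup>2) * (r - 1) * jacobi_hsq n a b = (r + 1) * (r\<^sup>2 - \<sigma>\<^sup>2) * jacobi_hsq (Suc n) a b"
    using jacobi_hsq_Suc[OF a b ab] unfolding r_def \<eta>_def \<sigma>_def .
  moreover have "2 * r\<^sup>2 * X * (r - 1) = r * (4 * K * (K + a + b)) * jacobi_hsq (Suc n) a b"
    using r(2,3) by (simp add: X_def power2_eq_square field_simps)
  moreover have "4 * K * (K + a + b) = r\<^sup>2 - \<sigma>\<^sup>2"
    by (simp add: r(1) \<sigma>_def power2_eq_square algebra_simps)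
  ultimately have "((r\<^sup>2 - \<eta>\<^sup>2) * jacobi_hsq n a b - 2 * \<sigma> * \<eta> * 0 - 2 * r\<^sup>2 * X
        + (r\<^sup>2 - \<sigma>\<^sup>2) * jacobi_hsq (Suc n) a b) * (r - 1)
      = r * (r\<^sup>2 - \<sigma>\<^sup>2) * jacobi_hsq (Suc n) a b"
    by algebra
  then have bracket: "(r\<^sup>2 - \<eta>\<^sup>2) * jacobi_hsq n a b - 2 * \<sigma> * \<eta> * 0 - 2 * r\<^sup>2 * X
        + (r\<^sup>2 - \<sigma>\<^sup>2) * jacobi_hsq (Suc n) a b
      = r * (r\<^sup>2 - \<sigma>\<^sup>2) * jacobi_hsq (Suc n) a b / (r - 1)"
    using r(3) by (simp add: eq_divide_eq)
  from combined have "((\<lambda>x. (1 - x) powr (a + 1) * (1 + x) powr (b + 1) * jacobiW (Suc n) a b x) has_integral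
      (r\<^sup>2 - \<eta>\<^sup>2) / r\<^sup>2 * ((r\<^sup>2 - \<eta>\<^sup>2) * jacobi_hsq n a b - 2 * \<sigma> * \<eta> * 0
          - 2 * r\<^sup>2 * X + (r\<^sup>2 - \<sigma>\<^sup>2) * jacobi_hsq (Suc n) a b)) {-1..1}"
    by (rule has_integral_eq[rotated]) (simp add: weighted_jacobiW_Suc_eq[OF a b] P_def Q_def w_def r_def \<eta>_def \<sigma>_def)
  moreover have "(r\<^sup>2 - \<eta>\<^sup>2) / r\<^sup>2 * (r * (r\<^sup>2 - \<sigma>\<^sup>2) * jacobi_hsq (Suc n) a b / (r - 1))
      = (r\<^sup>2 - \<eta>\<^sup>2) * (r\<^sup>2 - \<sigma>\<^sup>2) / (r * (r - 1)) * jacobi_hsq (Suc n) a b"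
    using r(2,3) by (simp add: power2_eq_square field_simps)
  ultimately show ?thesis
    unfolding bracket by simp
qed

theorem lemma6:
  fixes k :: nat and \<alpha> \<beta> :: real
  assumes "k \<ge> 1" and "\<alpha> > \<beta>" and "\<beta> > 0"
  shows "integral {-1..1}
           (\<lambda>x. (1 - x) powr (\<alpha> + 1) * (1 + x) powr (\<beta> + 1) * jacobiW k \<alpha> \<beta> x)
         = (let \<eta> = \<alpha> - \<beta>; \<sigma> = \<alpha> + \<beta>; \<rho> = 2 * real k + \<alpha> + \<beta>
            in (\<rho>^2 - \<eta>^2) * (\<rho>^2 - \<sigma>^2) / (\<rho> * (\<rho> - 1)) * jacobi_hsq k \<alpha> \<beta>)"
proof -
  obtain n where k: "k = Suc n"
    using assms(1) by (cases k) auto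
  have "\<alpha> > -1" "\<beta> > -1" "real n + \<alpha> + \<beta> + 1 > 0"
    using assms by auto
  then show ?thesis
    unfolding k Let_def by (rule integral_unique[OF has_integral_jacobiW_Suc])
qed

end
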